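(* For every $\Delta \ge 1$ there is a local algorithm, using only a port numbering (no unique identifiers), that on every weakly $2$-coloured graph $\mathcal{G}=(V,E)$ without isolated nodes and of maximum degree at most $\Delta$ outputs a dominating set $D$ with $|D| \le |V|/2$ and hence $|D| \le \tfrac{\Delta+1}{2}|D^*|$, where $D^*$ is a minimum dominating set of $\mathcal{G}$.
   Context: Model: a graph $\mathcal{G}=(V,E)$ without isolated nodes is a distributed system; every node runs the same deterministic algorithm. Communication is synchronous: in each round every node receives messages from its neighbours, performs local computation, and sends messages to its neighbours. Each node knows its degree, its own input label (e.g. its colour), and the global degree bound $\Delta$. A local algorithm is one that terminates after $T$ rounds, where $T$ may depend on $\Delta$ but not on the number of nodes; its output at a node is whether the node belongs to the solution. A port numbering means each node has a fixed ordering of its incident edges, known to it; nodes have no identifiers. A weak $2$-colouring assigns each node black or white so that every non-isolated node has at least one neighbour of the opposite colour; it is given as input. *)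

theory Defs
  imports Complex_Main
begin

text \<open>Nodes are natural numbers (every finite graph is
isomorphic to one on nat; nodes never see these names). deg v is the degree of v,
and port i < deg v of node v is connected to port j of node u, where p v i = (u, j).\<close>

definition port_graph :: "nat set \<Rightarrow> (nat \<Rightarrow> nat) \<Rightarrow> (nat \<Rightarrow> nat \<Rightarrow> nat \<times> nat) \<Rightarrow> bool" where
  "port_graph V deg p \<longleftrightarrow> finite V \<and>
     (\<forall>v\<in>V. \<forall>i<deg v. fst (p v i) \<in> V \<and> snd (p v i) < deg (fst (p v i)) \<and>
                        p (fst (p v i)) (snd (p v i)) = (v, i) \<and> fst (p v i) \<noteq> v) \<and>
     (\<forall>v\<in>V. \<forall>i<deg v. \<forall>i'<deg v. fst (p v i) = fst (p v i') \<longrightarrow> i = i')"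

definition adj :: "nat set \<Rightarrow> (nat \<Rightarrow> nat) \<Rightarrow> (nat \<Rightarrow> nat \<Rightarrow> nat \<times> nat) \<Rightarrow> nat \<Rightarrow> nat \<Rightarrow> bool" where
  "adj V deg p v u \<longleftrightarrow> v \<in> V \<and> (\<exists>i<deg v. fst (p v i) = u)"

definition no_isolated :: "nat set \<Rightarrow> (nat \<Rightarrow> nat) \<Rightarrow> bool" where
  "no_isolated V deg \<longleftrightarrow> (\<forall>v\<in>V. deg v \<ge> 1)"

definition max_degree_le :: "nat set \<Rightarrow> (nat \<Rightarrow> nat) \<Rightarrow> nat \<Rightarrow> bool" where
  "max_degree_le V deg \<Delta> \<longleftrightarrow> (\<forall>v\<in>V. deg v \<le> \<Delta>)"

text \<open>Weak 2-colouring (True = black, False = white).\<close>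
definition weak_2_colouring :: "nat set \<Rightarrow> (nat \<Rightarrow> nat) \<Rightarrow> (nat \<Rightarrow> nat \<Rightarrow> nat \<times> nat) \<Rightarrow> (nat \<Rightarrow> bool) \<Rightarrow> bool" where
  "weak_2_colouring V deg p col \<longleftrightarrow>
     (\<forall>v\<in>V. (\<exists>u. adj V deg p v u) \<longrightarrow> (\<exists>u. adj V deg p v u \<and> col u \<noteq> col v))"

definition dominating :: "nat set \<Rightarrow> (nat \<Rightarrow> nat) \<Rightarrow> (nat \<Rightarrow> nat \<Rightarrow> nat \<times> nat) \<Rightarrow> nat set \<Rightarrow> bool" where
  "dominating V deg p D \<longleftrightarrow> D \<subseteq> V \<and> (\<forall>v\<in>V. v \<in> D \<or> (\<exists>u\<in>D. adj V deg p v u))"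

definition min_dominating :: "nat set \<Rightarrow> (nat \<Rightarrow> nat) \<Rightarrow> (nat \<Rightarrow> nat \<Rightarrow> nat \<times> nat) \<Rightarrow> nat set \<Rightarrow> bool" where
  "min_dominating V deg p D \<longleftrightarrow> dominating V deg p D \<and>
     (\<forall>D'. dominating V deg p D' \<longrightarrow> card D \<le> card D')"

text \<open>Local states and messages are natural numbers (any finite data can be encoded).
The initial state depends only on the node's degree and its input colour;
in each round a node sends msg s i on port i, receives the list of messages
indexed by its ports and updates its state; after rounds rounds it outputs.\<close>
record pn_alg =
  init :: "nat \<Rightarrow> bool \<Rightarrow> nat"
  msg :: "nat \<Rightarrow> nat \<Rightarrow> nat"
  step :: "nat \<Rightarrow> nat list \<Rightarrow> nat"
  out :: "nat \<Rightarrow> bool"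
  rounds :: nat

primrec run_state :: "pn_alg \<Rightarrow> (nat \<Rightarrow> nat) \<Rightarrow> (nat \<Rightarrow> nat \<Rightarrow> nat \<times> nat) \<Rightarrow> (nat \<Rightarrow> bool) \<Rightarrow> nat \<Rightarrow> nat \<Rightarrow> nat" where
  "run_state A deg p col 0 v = init A (deg v) (col v)"
| "run_state A deg p col (Suc t) v =
     step A (run_state A deg p col t v)
       (map (\<lambda>i. msg A (run_state A deg p col t (fst (p v i))) (snd (p v i))) [0..<deg v])"

definition alg_output :: "pn_alg \<Rightarrow> nat set \<Rightarrow> (nat \<Rightarrow> nat) \<Rightarrow> (nat \<Rightarrow> nat \<Rightarrow> nat \<times> nat) \<Rightarrow> (nat \<Rightarrow> bool) \<Rightarrow> nat set" where
  "alg_output A V deg p col = {v \<in> V. out A (run_state A deg p col (rounds A) v)}"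

end

theory Submission
  imports Defs "HOL-Library.Nat_Bijection"
begin

(* Every node v picks its parent: the neighbour behind the first port
   leading to a node of the opposite colour (it exists by the weak 2-colouring).
   A black node with at least one white child is a centre; every white node belongs
   to the cluster of its (black) parent, every childless black node to the cluster of
   its parent's parent.  Each cluster of centre c thus consists of c, its n1 white
   children and n2 black "leaves" hanging below them.  If n1 <= n2 + 1 the white
   children are selected, otherwise c and the leaves; either choice dominates the
   cluster and takes at most half of its 1 + n1 + n2 nodes.  Summing over the
   partition into clusters gives |D| <= |V|/2, and |V| <= (Delta+1)|D*| for every
   dominating set D* gives the approximation ratio. *)

text \<open>Every dominating set covers the graph by closed neighbourhoods of size at most
  \<open>\<Delta> + 1\<close>; this yields the lower bound on the optimum.\<close>
lemma card_le_dominating: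
  assumes pg: "port_graph V deg p" and md: "max_degree_le V deg \<Delta>"
    and dom: "dominating V deg p Ds"
  shows "card V \<le> Suc \<Delta> * card Ds"
proof -
  let ?N = "\<lambda>u. insert u (fst ` p u ` {..<deg u})"
  have DsV: "Ds \<subseteq> V" using dom by (simp add: dominating_def)
  have finDs: "finite Ds" using DsV pg finite_subset by (auto simp: port_graph_def)
  have cover: "V \<subseteq> (\<Union>u\<in>Ds. ?N u)"
  proof
    fix v assume v: "v \<in> V"
    show "v \<in> (\<Union>u\<in>Ds. ?N u)"
    proof (cases "v \<in> Ds")
      case False
      then obtain i where i: "i < deg v" "fst (p v i) \<in> Ds"
        using dom v by (auto simp: dominating_def adj_def)
      let ?u = "fst (p v i)"
      have "snd (p v i) < deg ?u" "fst (p ?u (snd (p v i))) = v"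
        using pg v i(1) by (auto simp: port_graph_def)
      then have "v \<in> ?N ?u" by (metis image_eqI lessThan_iff insertCI image_image)
      then show ?thesis using i(2) by blast
    qed blast
  qed
  have "card V \<le> card (\<Union>u\<in>Ds. ?N u)" using cover finDs by (intro card_mono) auto
  also have "\<dots> \<le> (\<Sum>u\<in>Ds. card (?N u))" by (rule card_UN_le[OF finDs])
  also have "\<dots> \<le> (\<Sum>u\<in>Ds. Suc \<Delta>)"
  proof (rule sum_mono)
    fix u assume "u \<in> Ds"
    then have "deg u \<le> \<Delta>" using md DsV by (auto simp: max_degree_le_def)
    moreover have "card (fst ` p u ` {..<deg u}) \<le> deg u"
      by (metis card_image_le card_lessThan finite_imageI finite_lessThan le_trans)
    ultimately show "card (?N u) \<le> Suc \<Delta>" by (simp add: card_insert_if)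
  qed
  finally show ?thesis by (simp add: mult.commute)
qed

text \<open>A coloured port-numbered graph, with the quantities of the cluster construction.
  No assumptions yet: these notions are also used to describe what the algorithm
  computes.\<close>
locale coloured_graph =
  fixes V :: "nat set" and deg :: "nat \<Rightarrow> nat" and p :: "nat \<Rightarrow> nat \<Rightarrow> nat \<times> nat"
    and col :: "nat \<Rightarrow> bool"
begin

abbreviation nb :: "nat \<Rightarrow> nat \<Rightarrow> nat" where "nb v i \<equiv> fst (p v i)"
abbreviation bp :: "nat \<Rightarrow> nat \<Rightarrow> nat" where "bp v i \<equiv> snd (p v i)"

definition parent_port :: "nat \<Rightarrow> nat" where
  "parent_port v = (LEAST i. i < deg v \<and> col (nb v i) \<noteq> col v)"

abbreviation parent :: "nat \<Rightarrow> nat" where "parent v \<equiv> nb v (parent_port v)"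

definition ports_from :: "nat \<Rightarrow> (nat \<Rightarrow> bool) \<Rightarrow> nat set" where
  "ports_from u Q = {i. i < deg u \<and> Q (nb u i) \<and> bp u i = parent_port (nb u i)}"

definition n_children :: "nat \<Rightarrow> nat" where
  "n_children u = card (ports_from u (\<lambda>x. \<not> col x))"

definition n_leaves :: "nat \<Rightarrow> nat" where
  "n_leaves w = card (ports_from w (\<lambda>x. col x \<and> n_children x = 0))"

definition n_cluster_leaves :: "nat \<Rightarrow> nat" where
  "n_cluster_leaves c = (\<Sum>i\<in>ports_from c (\<lambda>x. \<not> col x). n_leaves (nb c i))"

definition take_white :: "nat \<Rightarrow> bool" where
  "take_white c \<longleftrightarrow> n_children c \<le> Suc (n_cluster_leaves c)"

definition centres :: "nat set" where
  "centres = {c \<in> V. col c \<and> 0 < n_children c}"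

definition centre :: "nat \<Rightarrow> nat" where
  "centre v = (if col v then (if 0 < n_children v then v else parent (parent v)) else parent v)"

definition cluster :: "nat \<Rightarrow> nat set" where
  "cluster c = {v \<in> V. centre v = c}"

definition children :: "nat \<Rightarrow> nat set" where
  "children c = {w \<in> V. \<not> col w \<and> parent w = c}"

definition leaves :: "nat \<Rightarrow> nat set" where
  "leaves w = {b \<in> V. col b \<and> n_children b = 0 \<and> parent b = w}"

definition cluster_leaves :: "nat \<Rightarrow> nat set" where
  "cluster_leaves c = (\<Union>w\<in>children c. leaves w)"

definition selected :: "nat \<Rightarrow> bool" where
  "selected v \<longleftrightarrow> (col v \<longleftrightarrow> \<not> take_white (centre v))"

end

locale weakly_coloured_graph = coloured_graph +
  assumes pg: "port_graph V deg p" and ni: "no_isolated V deg"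
    and wc: "weak_2_colouring V deg p col"
begin

lemma finite_V: "finite V"
  using pg by (simp add: port_graph_def)

lemma port_back:
  "v \<in> V \<Longrightarrow> i < deg v \<Longrightarrow> nb v i \<in> V \<and> bp v i < deg (nb v i) \<and> p (nb v i) (bp v i) = (v, i)"
  using pg by (simp add: port_graph_def)

lemma port_inj: "v \<in> V \<Longrightarrow> i < deg v \<Longrightarrow> i' < deg v \<Longrightarrow> nb v i = nb v i' \<Longrightarrow> i = i'"
  using pg by (simp add: port_graph_def)

lemma adj_port: "v \<in> V \<Longrightarrow> i < deg v \<Longrightarrow> adj V deg p v (nb v i)"
  by (auto simp: adj_def)

text \<open>The weak 2-colouring makes the parent well defined.\<close>
lemma parent_port_ok:
  assumes "v \<in> V" shows "parent_port v < deg v \<and> col (parent v) \<noteq> col v"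
proof -
  have "deg v \<ge> 1" using ni assms by (simp add: no_isolated_def)
  then have "\<exists>u. adj V deg p v u" using adj_port[OF assms, of 0] by auto
  then obtain u where "adj V deg p v u" "col u \<noteq> col v"
    using wc assms by (auto simp: weak_2_colouring_def)
  then obtain i where "i < deg v \<and> col (nb v i) \<noteq> col v" by (auto simp: adj_def)
  then show ?thesis unfolding parent_port_def by (rule LeastI)
qed

lemma parent_port_lt: "v \<in> V \<Longrightarrow> parent_port v < deg v"
  using parent_port_ok by blast

lemma parent_col: "v \<in> V \<Longrightarrow> col (parent v) \<longleftrightarrow> \<not> col v"
  using parent_port_ok by blast

lemma parent_in_V: "v \<in> V \<Longrightarrow> parent v \<in> V"
  using parent_port_lt port_back by blast

text \<open>Ports of \<open>u\<close> reporting a choice of \<open>u\<close> as parent correspond bijectively to the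
  nodes that chose \<open>u\<close>; this is what lets the algorithm count children and leaves.\<close>
lemma ports_from_bij:
  assumes u: "u \<in> V"
  shows "bij_betw (nb u) (ports_from u Q) {x \<in> V. Q x \<and> parent x = u}"
proof (rule bij_betw_imageI)
  show "inj_on (nb u) (ports_from u Q)"
    using port_inj[OF u] by (auto simp: inj_on_def ports_from_def)
  show "nb u ` ports_from u Q = {x \<in> V. Q x \<and> parent x = u}"
  proof
    show "nb u ` ports_from u Q \<subseteq> {x \<in> V. Q x \<and> parent x = u}"
      using port_back[OF u] by (force simp: ports_from_def)
    show "{x \<in> V. Q x \<and> parent x = u} \<subseteq> nb u ` ports_from u Q"
    proof
      fix x assume x: "x \<in> {x \<in> V. Q x \<and> parent x = u}"
      let ?i = "bp x (parent_port x)"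
      have "?i < deg u" "nb u ?i = x" "bp u ?i = parent_port x"
        using x port_back[of x "parent_port x"] parent_port_lt[of x] by auto
      then show "x \<in> nb u ` ports_from u Q"
        using x by (auto simp: ports_from_def image_iff)
    qed
  qed
qed

lemma card_children: "c \<in> V \<Longrightarrow> card (children c) = n_children c"
  using ports_from_bij[of c "\<lambda>x. \<not> col x"]
  by (simp add: bij_betw_same_card children_def n_children_def)

lemma card_leaves: "w \<in> V \<Longrightarrow> card (leaves w) = n_leaves w"
  using ports_from_bij[of w "\<lambda>x. col x \<and> n_children x = 0"]
  by (simp add: bij_betw_same_card leaves_def n_leaves_def conj_assoc)

lemma card_cluster_leaves:
  assumes c: "c \<in> V" shows "card (cluster_leaves c) = n_cluster_leaves c"
proof -
  have "card (cluster_leaves c) = (\<Sum>w\<in>children c. card (leaves w))"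
    unfolding cluster_leaves_def using finite_V
    by (intro card_UN_disjoint) (auto simp: children_def leaves_def)
  also have "\<dots> = (\<Sum>w\<in>children c. n_leaves w)"
    by (intro sum.cong) (auto simp: children_def card_leaves)
  also have "\<dots> = n_cluster_leaves c"
    unfolding n_cluster_leaves_def children_def
    by (rule sum.reindex_bij_betw[OF ports_from_bij[OF c], symmetric])
  finally show ?thesis .
qed

lemma parent_of_white_centre:
  assumes v: "v \<in> V" "\<not> col v" shows "parent v \<in> centres"
proof -
  have "v \<in> children (parent v)" using v by (simp add: children_def)
  then have "0 < card (children (parent v))"
    using finite_V by (auto simp: children_def card_gt_0_iff)
  then show ?thesis
    using v parent_in_V parent_col card_children by (auto simp: centres_def)
qed

lemma centre_of_centre: "c \<in> centres \<Longrightarrow> centre c = c"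
  by (simp add: centres_def centre_def)

lemma centre_in_centres: "v \<in> V \<Longrightarrow> centre v \<in> centres"
  using parent_of_white_centre parent_in_V parent_col
  by (auto simp: centre_def centres_def)

lemma centre_parent:
  assumes v: "v \<in> V" "v \<notin> centres" shows "centre (parent v) = centre v"
  using v parent_col[OF v(1)] centre_of_centre[OF parent_of_white_centre[OF v(1)]]
  by (auto simp: centre_def centres_def)

text \<open>An unselected node is dominated by its parent, which lies in the same cluster
  but has the other colour; an unselected centre is dominated by any of its white children.\<close>
lemma selected_dominating: "dominating V deg p {v \<in> V. selected v}"
  unfolding dominating_def
proof (intro conjI ballI)
  fix v assume v: "v \<in> V"
  have "\<exists>i<deg v. selected (nb v i)" if ns: "\<not> selected v"
  proof (cases "v \<in> centres")
    case True
    then have "take_white v" using ns centre_of_centre by (simp add: selected_def centres_def)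
    from True have "children v \<noteq> {}"
      using card_children[OF v] by (auto simp: centres_def)
    then obtain w where w: "w \<in> V" "\<not> col w" "parent w = v" by (auto simp: children_def)
    then have "centre w = v" by (simp add: centre_def)
    then have "selected w" using w \<open>take_white v\<close> by (simp add: selected_def)
    moreover have "\<exists>i<deg v. nb v i = w"
      using w port_back[OF w(1) parent_port_lt[OF w(1)]] by (metis fst_conv)
    ultimately show ?thesis by blast
  next
    case False
    then have "selected (parent v)"
      using ns centre_parent[OF v] parent_col[OF v] by (simp add: selected_def)
    then show ?thesis using parent_port_lt[OF v] by blast
  qed
  then show "v \<in> {v \<in> V. selected v} \<or> (\<exists>u\<in>{v \<in> V. selected v}. adj V deg p v u)"
    using v adj_port port_back by blast
qed auto

lemma cluster_white: "c \<in> centres \<Longrightarrow> {v \<in> cluster c. \<not> col v} = children c"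
  by (auto simp: cluster_def children_def centre_def centres_def)

lemma cluster_black: assumes c: "c \<in> centres"
  shows "{v \<in> cluster c. col v} = insert c (cluster_leaves c)"
proof -
  have "col b \<and> centre b = c \<longleftrightarrow> b = c \<or> (col b \<and> n_children b = 0 \<and> centre b = c)"
    if "b \<in> V" for b
    using c that by (auto simp: centre_def centres_def)
  moreover have "(b \<in> V \<and> col b \<and> n_children b = 0 \<and> centre b = c) \<longleftrightarrow> b \<in> cluster_leaves c" for b
    using parent_in_V parent_col
    by (auto simp: cluster_leaves_def children_def leaves_def centre_def)
  ultimately show ?thesis using c
    by (auto simp: cluster_def centres_def centre_of_centre cluster_leaves_def leaves_def)
qed

lemma finite_cluster_leaves: "finite (cluster_leaves c)"
  by (rule finite_subset[OF _ finite_V]) (auto simp: cluster_leaves_def leaves_def)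

lemma centre_not_leaf: "c \<in> centres \<Longrightarrow> c \<notin> cluster_leaves c"
  by (auto simp: cluster_leaves_def leaves_def centres_def)

lemma card_cluster: assumes c: "c \<in> centres"
  shows "card (cluster c) = Suc (n_children c + n_cluster_leaves c)"
proof -
  have cV: "c \<in> V" using c by (simp add: centres_def)
  have fin: "finite (cluster c)" using finite_V by (simp add: cluster_def)
  have "cluster c = {v \<in> cluster c. col v} \<union> {v \<in> cluster c. \<not> col v}" by auto
  then have "card (cluster c) = card {v \<in> cluster c. col v} + card {v \<in> cluster c. \<not> col v}"
    using fin by (metis (no_types, lifting) card_Un_disjoint disjoint_iff finite_Un mem_Collect_eq)
  also have "\<dots> = Suc (n_cluster_leaves c) + n_children c"
    using cluster_white[OF c] cluster_black[OF c] centre_not_leaf[OF c] finite_cluster_leaves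
      card_children[OF cV] card_cluster_leaves[OF cV] by simp
  finally show ?thesis by simp
qed

lemma selected_in_cluster: assumes c: "c \<in> centres"
  shows "2 * card ({v \<in> V. selected v} \<inter> cluster c) \<le> card (cluster c)"
proof -
  have cV: "c \<in> V" using c by (simp add: centres_def)
  have sel: "{v \<in> V. selected v} \<inter> cluster c =
      (if take_white c then {v \<in> cluster c. \<not> col v} else {v \<in> cluster c. col v})"
    by (auto simp: cluster_def selected_def)
  show ?thesis
    unfolding sel card_cluster[OF c] using centre_not_leaf[OF c] finite_cluster_leaves cluster_white[OF c] cluster_black[OF c]
      card_children[OF cV] card_cluster_leaves[OF cV] by (auto simp: take_white_def)
qed

text \<open>The clusters partition \<open>V\<close>, so the selection is at most half of the graph.\<close>
lemma selected_half: "2 * card {v \<in> V. selected v} \<le> card V"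
proof -
  let ?D = "{v \<in> V. selected v}"
  have finC: "finite centres" using finite_V by (simp add: centres_def)
  have disj: "\<forall>i\<in>centres. \<forall>j\<in>centres. i \<noteq> j \<longrightarrow> cluster i \<inter> cluster j = {}"
    by (auto simp: cluster_def)
  have V: "V = (\<Union>c\<in>centres. cluster c)" using centre_in_centres by (auto simp: cluster_def)
  have D: "?D = (\<Union>c\<in>centres. ?D \<inter> cluster c)" using V by blast
  have "card V = (\<Sum>c\<in>centres. card (cluster c))"
    by (subst V, rule card_UN_disjoint) (use finC finite_V disj in \<open>auto simp: cluster_def\<close>)
  moreover have "card ?D = (\<Sum>c\<in>centres. card (?D \<inter> cluster c))"
    by (subst D, rule card_UN_disjoint) (use finC finite_V disj in \<open>auto simp: cluster_def\<close>)
  ultimately show ?thesis using selected_in_cluster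
    by (simp add: sum_distrib_left sum_mono)
qed

end

text \<open>A node keeps its whole history as state: the list
  \<open>[degree, colour bit, m\<^sub>1, ..., m\<^sub>t]\<close>, where \<open>m\<^sub>k\<close> encodes the vector of messages received
  in round \<open>k\<close>, indexed by ports.  From it the node reads off the cluster quantities.\<close>

definition bit :: "bool \<Rightarrow> nat" where "bit b = (if b then 1 else 0)"

lemma bit_eq_iff [simp]:
  "bit x = bit y \<longleftrightarrow> x = y" "bit x = 0 \<longleftrightarrow> \<not> x" "bit x = Suc 0 \<longleftrightarrow> x"
  by (auto simp: bit_def)

text \<open>The messages received in round \<open>k + 1\<close>.\<close>
definition received :: "nat \<Rightarrow> nat list \<Rightarrow> nat list" where
  "received k h = list_decode (h ! (k + 2))"

definition parent_port_obs :: "nat list \<Rightarrow> nat" where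
  "parent_port_obs h = (LEAST i. i < h ! 0 \<and> received 0 h ! i \<noteq> h ! 1)"

definition n_children_obs :: "nat list \<Rightarrow> nat" where
  "n_children_obs h = sum_list (received 1 h)"

definition n_leaves_obs :: "nat list \<Rightarrow> nat" where
  "n_leaves_obs h = sum_list (received 2 h)"

definition n_cluster_leaves_obs :: "nat list \<Rightarrow> nat" where
  "n_cluster_leaves_obs h = sum_list (received 3 h)"

definition take_white_obs :: "nat list \<Rightarrow> bool" where
  "take_white_obs h \<longleftrightarrow> n_children_obs h \<le> Suc (n_cluster_leaves_obs h)"

text \<open>The message sent on port \<open>j\<close> in round \<open>length h - 1\<close>: (1) the colour;
  (2) a white node tells its parent; (3) a childless black node tells its parent;
  (4) a white node sends its number of leaves to its parent; (5) a centre broadcasts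
  its decision (1: white, 2: black); (6) a white node forwards its parent's decision.\<close>
definition send :: "nat list \<Rightarrow> nat \<Rightarrow> nat" where
  "send h j =
    (if length h = 2 then h ! 1
     else if length h = 3 then (if h ! 1 = 0 \<and> j = parent_port_obs h then 1 else 0)
     else if length h = 4 then
       (if h ! 1 = 1 \<and> n_children_obs h = 0 \<and> j = parent_port_obs h then 1 else 0)
     else if length h = 5 then (if h ! 1 = 0 \<and> j = parent_port_obs h then n_leaves_obs h else 0)
     else if length h = 6 then
       (if h ! 1 = 1 \<and> 0 < n_children_obs h then (if take_white_obs h then 1 else 2) else 0)
     else if length h = 7 then (if h ! 1 = 0 then received 4 h ! parent_port_obs h else 0)
     else 0)"

definition decide :: "nat list \<Rightarrow> bool" where
  "decide h =
    (if h ! 1 = 1 then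
       (if 0 < n_children_obs h then \<not> take_white_obs h
        else received 5 h ! parent_port_obs h = 2)
     else received 4 h ! parent_port_obs h = 1)"

definition alg :: pn_alg where
  "alg = \<lparr>init = \<lambda>d c. list_encode [d, bit c], msg = \<lambda>s j. send (list_decode s) j,
          step = \<lambda>s ms. list_encode (list_decode s @ [list_encode ms]),
          out = \<lambda>s. decide (list_decode s), rounds = 6\<rparr>"

primrec history ::
  "(nat \<Rightarrow> nat) \<Rightarrow> (nat \<Rightarrow> nat \<Rightarrow> nat \<times> nat) \<Rightarrow> (nat \<Rightarrow> bool) \<Rightarrow> nat \<Rightarrow> nat \<Rightarrow> nat list" where
  "history deg p col 0 v = [deg v, bit (col v)]"
| "history deg p col (Suc t) v = history deg p col t v @
     [list_encode (map (\<lambda>i. send (history deg p col t (fst (p v i))) (snd (p v i))) [0..<deg v])]"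

lemma run_state_history: "run_state alg deg p col t v = list_encode (history deg p col t v)"
  by (induction t arbitrary: v) (simp_all add: alg_def)

lemma length_history [simp]: "length (history deg p col t v) = t + 2"
  by (induction t) auto

lemma history_degree [simp]: "history deg p col t v ! 0 = deg v"
  by (induction t) (auto simp: nth_append)

lemma history_colour [simp]: "history deg p col t v ! Suc 0 = bit (col v)"
  by (induction t) (auto simp: nth_append)

lemma received_history:
  "k < t \<Longrightarrow> received k (history deg p col t v) =
     map (\<lambda>i. send (history deg p col k (fst (p v i))) (snd (p v i))) [0..<deg v]"
proof (induction t)
  case (Suc t)
  then consider "k < t" | "k = t" by linarith
  then show ?case
    using Suc by cases (auto simp: received_def nth_append)
qed simp

declare history.simps [simp del]

lemma sum_list_map_if:
  "sum_list (map (\<lambda>i. if P i then f i else 0) [0..<n]) = (\<Sum>i\<in>{i. i < n \<and> P i}. (f i :: nat))"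
proof -
  have "sum_list (map (\<lambda>i. if P i then f i else 0) [0..<n]) = (\<Sum>i\<in>{0..<n}. if P i then f i else 0)"
    by (metis atLeastLessThan_upt sum_set_upt_conv_sum_list_nat)
  also have "\<dots> = (\<Sum>i\<in>{0..<n} \<inter> {i. P i}. f i)" by (simp add: sum.inter_restrict)
  also have "{0..<n} \<inter> {i. P i} = {i. i < n \<and> P i}" by auto
  finally show ?thesis .
qed

context coloured_graph
begin

abbreviation hist :: "nat \<Rightarrow> nat \<Rightarrow> nat list" where "hist t v \<equiv> history deg p col t v"

text \<open>The decision a node learns in round 5 from a neighbour: nonzero exactly at centres.\<close>
definition signal :: "nat \<Rightarrow> nat" where
  "signal c = (if col c \<and> 0 < n_children c then (if take_white c then 1 else 2) else 0)"

lemma received_colours: "0 < t \<Longrightarrow> received 0 (hist t v) = map (\<lambda>i. bit (col (nb v i))) [0..<deg v]"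
  by (simp add: received_history send_def)

lemma parent_port_obs_eq: "0 < t \<Longrightarrow> parent_port_obs (hist t v) = parent_port v"
  unfolding parent_port_obs_def parent_port_def using received_colours[of t v]
  by (intro arg_cong[where f = Least] ext) (auto split: if_splits)

lemma n_children_obs_eq: "1 < t \<Longrightarrow> n_children_obs (hist t v) = n_children v"
proof -
  assume t: "1 < t"
  have "received 1 (hist t v) =
      map (\<lambda>i. if \<not> col (nb v i) \<and> bp v i = parent_port (nb v i) then 1 else 0) [0..<deg v]"
    using t by (auto simp: received_history send_def parent_port_obs_eq)
  then show ?thesis
    by (simp add: n_children_obs_def n_children_def ports_from_def sum_list_map_if)
qed

lemma n_leaves_obs_eq: "2 < t \<Longrightarrow> n_leaves_obs (hist t v) = n_leaves v"
proof -
  assume t: "2 < t"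
  have "received 2 (hist t v) = map (\<lambda>i. if col (nb v i) \<and> n_children (nb v i) = 0 \<and>
      bp v i = parent_port (nb v i) then 1 else 0) [0..<deg v]"
    using t by (auto simp: received_history send_def parent_port_obs_eq n_children_obs_eq)
  then show ?thesis
    by (simp add: n_leaves_obs_def n_leaves_def ports_from_def sum_list_map_if)
qed

lemma n_cluster_leaves_obs_eq: "3 < t \<Longrightarrow> n_cluster_leaves_obs (hist t v) = n_cluster_leaves v"
proof -
  assume t: "3 < t"
  have "received 3 (hist t v) = map (\<lambda>i. if \<not> col (nb v i) \<and> bp v i = parent_port (nb v i)
      then n_leaves (nb v i) else 0) [0..<deg v]"
    using t by (auto simp: received_history send_def parent_port_obs_eq n_leaves_obs_eq)
  then show ?thesis
    by (simp add: n_cluster_leaves_obs_def n_cluster_leaves_def ports_from_def sum_list_map_if)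
qed

lemma take_white_obs_eq: "3 < t \<Longrightarrow> take_white_obs (hist t v) = take_white v"
  by (simp add: take_white_obs_def take_white_def n_children_obs_eq n_cluster_leaves_obs_eq)

lemma received_signals: "4 < t \<Longrightarrow> received 4 (hist t v) = map (\<lambda>i. signal (nb v i)) [0..<deg v]"
  by (auto simp: received_history send_def n_children_obs_eq take_white_obs_eq signal_def)

lemma received_forwarded:
  assumes "parent_port v < deg v" "parent_port (parent v) < deg (parent v)"
  shows "received 5 (hist 6 v) ! parent_port v =
    (if col (parent v) then 0 else signal (parent (parent v)))"
  using assms by (auto simp: received_history send_def parent_port_obs_eq signal_def
      n_children_obs_eq take_white_obs_eq)

lemma decide_hist:
  assumes "parent_port v < deg v" "parent_port (parent v) < deg (parent v)"
  shows "decide (hist 6 v) =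
    (if col v then (if 0 < n_children v then \<not> take_white v
                    else (if col (parent v) then 0 else signal (parent (parent v))) = 2)
     else signal (parent v) = 1)"
  using assms unfolding decide_def
  by (simp add: n_children_obs_eq take_white_obs_eq parent_port_obs_eq received_forwarded
      received_signals)

end

context weakly_coloured_graph
begin

lemma signal_centre: "c \<in> centres \<Longrightarrow> signal c = (if take_white c then 1 else 2)"
  by (simp add: centres_def signal_def)

lemma alg_output_selected: "alg_output alg V deg p col = {v \<in> V. selected v}"
proof -
  have "decide (hist 6 v) = selected v" if v: "v \<in> V" for v
  proof -
    have "centre v \<in> centres" using centre_in_centres[OF v] .
    then show ?thesis
      using v decide_hist parent_port_lt parent_in_V parent_col signal_centre
      by (auto simp: selected_def centre_def split: if_splits)
  qed
  moreover have "rounds alg = 6" "out alg = (\<lambda>s. decide (list_decode s))"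
    by (simp_all add: alg_def)
  ultimately show ?thesis
    by (auto simp: alg_output_def run_state_history)
qed

end

theorem theorem6:
  fixes \<Delta> :: nat
  assumes "\<Delta> \<ge> 1"
  shows "\<exists>A :: pn_alg. \<forall>V deg p col.
           port_graph V deg p \<and> no_isolated V deg \<and> max_degree_le V deg \<Delta> \<and>
           weak_2_colouring V deg p col \<longrightarrow>
             (let D = alg_output A V deg p col in
                dominating V deg p D \<and>
                real (card D) \<le> real (card V) / 2 \<and>
                (\<forall>Ds. min_dominating V deg p Ds \<longrightarrow>
                   real (card D) \<le> (real \<Delta> + 1) / 2 * real (card Ds)))"
proof (intro exI allI impI)
  fix V deg p col
  assume H: "port_graph V deg p \<and> no_isolated V deg \<and> max_degree_le V deg \<Delta> \<and>
    weak_2_colouring V deg p col"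
  interpret weakly_coloured_graph V deg p col using H by unfold_locales auto
  let ?D = "alg_output alg V deg p col"
  have half: "real (card ?D) \<le> real (card V) / 2"
    using selected_half alg_output_selected by simp
  have ratio: "real (card ?D) \<le> (real \<Delta> + 1) / 2 * real (card Ds)"
    if "min_dominating V deg p Ds" for Ds
  proof -
    have "card V \<le> Suc \<Delta> * card Ds"
      using card_le_dominating[of V deg p \<Delta> Ds] H that by (simp add: min_dominating_def)
    then have "real (card V) \<le> (real \<Delta> + 1) * real (card Ds)"
      by (metis of_nat_Suc of_nat_le_iff of_nat_mult add.commute)
    then show ?thesis using half by linarith
  qed
  show "let D = ?D in dominating V deg p D \<and> real (card D) \<le> real (card V) / 2 \<and>
      (\<forall>Ds. min_dominating V deg p Ds \<longrightarrow> real (card D) \<le> (real \<Delta> + 1) / 2 * real (card Ds))"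
    using selected_dominating alg_output_selected half ratio by (simp add: Let_def)
qed

end
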